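(* Let $G=SL(2,\mathbb{C})$, let $\Gamma$ be a finitely generated group with fixed generators $\bar{\epsilon}_1,\dots,\bar{\epsilon}_n$, let $\rho:\Gamma\to G$ be a representation and $A=(A_1,\dots,A_n)=(\rho(\bar{\epsilon}_1),\dots,\rho(\bar{\epsilon}_n))\in G^{\times n}$. The following are equivalent: (i) $A$ is stable; (ii) there exist $1\le j,k,l\le n$ such that $(\rho(\bar{\epsilon}_j),\rho(\bar{\epsilon}_k),\rho(\bar{\epsilon}_l))\in G^{\times3}$ is stable; (iii) there exist $1\le j,k,l\le n$ such that $\sigma_{jk}(A)\neq0$ or $\Delta_{jkl}(A)\neq0$; (iv) $A$ is not similar to an upper triangular $n$-matrix; (v) $\rho$ is irreducible.
   Context: $G$ acts on $G^{\times n}$ by simultaneous conjugation $g\cdot A=(gA_1g^{-1},\dots,gA_ng^{-1})$; a point is stable if its orbit map $G\to G^{\times n}$ is proper. Similar means conjugate by a common element of $GL(2,\mathbb{C})$; upper triangular $n$-matrix means all components upper triangular. $\sigma_{jk}(A)=\mathsf{tr}(A_jA_kA_j^{-1}A_k^{-1})-2$ and $\Delta_{jkl}(A)=(\mathsf{tr}(A_jA_kA_l)-\mathsf{tr}(A_lA_kA_j))^2$. $\rho$ is irreducible if no proper nonzero subspace of $\mathbb{C}^2$ is invariant under $\rho(\Gamma)$. *)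

theory Defs
  imports "HOL-Analysis.Analysis" "HOL-Algebra.Group" "HOL-Algebra.Generated_Groups"
begin

type_synonym cmat2 = "complex^2^2"

definition SL2 :: "cmat2 set" where
  "SL2 = {M. det M = 1}"

definition SL2_group :: "cmat2 monoid" where
  "SL2_group = \<lparr>carrier = SL2, mult = (**), one = mat 1\<rparr>"

definition SL2_tuples :: "(cmat2^'n) set" where
  "SL2_tuples = {A. \<forall>i. A $ i \<in> SL2}"

definition conj_act :: "cmat2 \<Rightarrow> cmat2^'n \<Rightarrow> cmat2^'n" where
  "conj_act g A = (\<chi> i. g ** A $ i ** matrix_inv g)"

definition stable :: "cmat2^'n \<Rightarrow> bool" where
  "stable A \<longleftrightarrow> proper_map (top_of_set SL2) (top_of_set SL2_tuples) (\<lambda>g. conj_act g A)"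

definition triple :: "'a \<Rightarrow> 'a \<Rightarrow> 'a \<Rightarrow> 'a^3" where
  "triple a b c = (\<chi> t. if t = 0 then a else if t = 1 then b else c)"

definition sigma :: "cmat2^'n \<Rightarrow> 'n \<Rightarrow> 'n \<Rightarrow> complex" where
  "sigma A j k = trace (A$j ** A$k ** matrix_inv (A$j) ** matrix_inv (A$k)) - 2"

definition Delta :: "cmat2^'n \<Rightarrow> 'n \<Rightarrow> 'n \<Rightarrow> 'n \<Rightarrow> complex" where
  "Delta A j k l = (trace (A$j ** A$k ** A$l) - trace (A$l ** A$k ** A$j))^2"

definition upper_triangular2 :: "cmat2 \<Rightarrow> bool" where
  "upper_triangular2 M \<longleftrightarrow> (\<forall>i j. j < i \<longrightarrow> M $ i $ j = 0)"

definition similar_upper_triangular :: "cmat2^'n \<Rightarrow> bool" where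
  "similar_upper_triangular A \<longleftrightarrow>
     (\<exists>P::cmat2. invertible P \<and> (\<forall>i. upper_triangular2 (P ** A $ i ** matrix_inv P)))"

definition irreducible_rep :: "('g, 'b) monoid_scheme \<Rightarrow> ('g \<Rightarrow> cmat2) \<Rightarrow> bool" where
  "irreducible_rep \<Gamma> \<rho> \<longleftrightarrow>
     \<not> (\<exists>V :: (complex^2) set. vec.subspace V \<and> V \<noteq> {0} \<and> V \<noteq> UNIV \<and>
          (\<forall>x\<in>carrier \<Gamma>. \<forall>v\<in>V. \<rho> x *v v \<in> V))"

end

theory Submission
  imports Defs
begin

text \<open>Everything reduces to whether the matrices \<open>A\<^sub>i\<close> have a common eigenvector.
  Such a vector spans an invariant line, which is the same as reducibility of \<open>\<rho>\<close>, and
  moving it to a coordinate axis triangularises all \<open>A\<^sub>i\<close> at once. If the \<open>A\<^sub>i\<close> have no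
  common eigenvector, three of them already have none, because a matrix fixing three pairwise
  independent lines is scalar. For \<open>X, Y \<in> SL(2,\<complex>)\<close> one has \<open>tr [X,Y] = 2\<close> iff \<open>X\<close> and
  \<open>Y\<close> share an eigenvector; if three matrices share eigenvectors pairwise but not jointly,
  moving two of these eigenlines to the axes gives \<open>tr (XYZ) - tr (ZYX) \<noteq> 0\<close> explicitly.
  Finally, the orbit map is proper iff conjugators keeping the orbit in a compact set are
  bounded. A common eigenvector yields diverging diagonal conjugators with this property;
  conversely, normalising diverging conjugators produces in the limit a nonzero singular
  matrix that intertwines \<open>A\<close> with a point of the orbit closure, and its kernel is a common
  eigenline.\<close>

section \<open>Two-by-two matrices\<close>

type_synonym 'a mat2 = "'a^2^2"

lemma matrix_mult_2_nth:
  "((A::'a::comm_semiring_1 mat2) ** B)$i$j = A$i$1 * B$1$j + A$i$2 * B$2$j"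
  by (simp add: matrix_matrix_mult_def sum_2)

lemma matrix_vector_mult_2_nth:
  "((A::'a::comm_semiring_1 mat2) *v v)$i = A$i$1 * v$1 + A$i$2 * v$2"
  by (simp add: matrix_vector_mult_def sum_2)

lemma mat_2_nth: "(mat a :: 'a::zero mat2)$i$j = (if i = j then a else 0)"
  by (simp add: mat_def)

lemma vec2_eq_iff: "(v::'a^2) = w \<longleftrightarrow> v$1 = w$1 \<and> v$2 = w$2"
  by (auto simp add: vec_eq_iff forall_2)

lemma mat2_eq_iff:
  "(A::'a mat2) = B \<longleftrightarrow> A$1$1 = B$1$1 \<and> A$1$2 = B$1$2 \<and> A$2$1 = B$2$1 \<and> A$2$2 = B$2$2"
  by (auto simp add: vec_eq_iff forall_2)

lemma trace_2: "trace (A::'a::semiring_1 mat2) = A$1$1 + A$2$2"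
  by (simp add: trace_def sum_2)

definition adj2 :: "'a::comm_ring_1 mat2 \<Rightarrow> 'a mat2" where
  "adj2 M = vector [vector [M$2$2, - M$1$2], vector [- M$2$1, M$1$1]]"

lemma adj2_nth [simp]:
  "adj2 M $1$1 = M$2$2" "adj2 M $1$2 = - M$1$2" "adj2 M $2$1 = - M$2$1" "adj2 M $2$2 = M$1$1"
  by (simp_all add: adj2_def)

lemmas mat2_simps =
  matrix_mult_2_nth matrix_vector_mult_2_nth mat_2_nth vec2_eq_iff mat2_eq_iff trace_2 det_2

lemma matrix_mul_adj2: "M ** adj2 M = mat (det M)"
  and adj2_matrix_mul: "adj2 M ** M = mat (det M)"
  by (simp_all add: mat2_simps algebra_simps)

lemma det_adj2: "det (adj2 M) = det M"
  by (simp add: mat2_simps algebra_simps)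

lemma adj2_mult: "adj2 (M ** N) = adj2 N ** adj2 M"
  by (simp add: mat2_simps algebra_simps)

lemma matrix_inv_unique:
  fixes A B :: "'a::comm_ring_1^'n^'n"
  assumes "A ** B = mat 1" "B ** A = mat 1"
  shows "matrix_inv A = B"
proof -
  have "A ** matrix_inv A = mat 1 \<and> matrix_inv A ** A = mat 1"
    unfolding matrix_inv_def using assms
    by (intro someI_ex[where P = "\<lambda>A'. A ** A' = mat 1 \<and> A' ** A = mat 1"]) blast
  then have "A ** matrix_inv A = mat 1" ..
  have "matrix_inv A = (B ** A) ** matrix_inv A" using assms(2) by (simp add: matrix_mul_lid)
  also have "\<dots> = B ** (A ** matrix_inv A)" by (simp add: matrix_mul_assoc)
  also have "\<dots> = B" using \<open>A ** matrix_inv A = mat 1\<close> by (simp add: matrix_mul_rid)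
  finally show ?thesis .
qed

lemma matrix_inv_eq_adj2: "det M = 1 \<Longrightarrow> matrix_inv M = adj2 M"
  by (rule matrix_inv_unique) (simp_all add: matrix_mul_adj2 adj2_matrix_mul)

lemma matrix_mul_matrix_inv:
  fixes P :: "'a::semiring_1^'n^'n"
  assumes "invertible P"
  shows "P ** matrix_inv P = mat 1" and "matrix_inv P ** P = mat 1"
  using someI_ex[OF assms[unfolded invertible_def]] unfolding matrix_inv_def by auto

section \<open>Invariant lines\<close>

definition cross2 :: "'a::comm_ring_1^2 \<Rightarrow> 'a^2 \<Rightarrow> 'a" where
  "cross2 u w = u$1 * w$2 - u$2 * w$1"

text \<open>\<open>v\<close> is zero or an eigenvector of \<open>M\<close>.\<close>
definition fixes_line :: "'a::comm_ring_1 mat2 \<Rightarrow> 'a^2 \<Rightarrow> bool" where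
  "fixes_line M v \<longleftrightarrow> cross2 (M *v v) v = 0"

lemma cross2_commute: "cross2 u w = - cross2 w u"
  by (simp add: cross2_def)

lemma cross2_matrix_vector_mult: "cross2 (P *v u) (P *v w) = det P * cross2 u w"
  by (simp add: cross2_def mat2_simps algebra_simps)

lemma cross2_scale_left: "cross2 (c *s u) u = 0"
  by (simp add: cross2_def)

lemma exists_cross2_nonzero:
  fixes v :: "'a::comm_ring_1^2"
  assumes "v \<noteq> 0"
  obtains w where "cross2 w v \<noteq> 0"
proof (cases "v$1 = 0")
  case True
  then have "cross2 (vector [1, 0]) v \<noteq> 0" using assms by (simp add: cross2_def vec2_eq_iff)
  then show ?thesis by (rule that)
next
  case False
  then have "cross2 (vector [0, 1]) v \<noteq> 0" by (simp add: cross2_def)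
  then show ?thesis by (rule that)
qed

lemma fixes_line_iff_eigenvector:
  fixes v :: "'a::field^2"
  assumes "v \<noteq> 0"
  shows "fixes_line M v \<longleftrightarrow> (\<exists>c. M *v v = c *s v)"
proof
  assume fix_v: "fixes_line M v"
  show "\<exists>c. M *v v = c *s v"
  proof (cases "v$1 = 0")
    case True
    then have "v$2 \<noteq> 0" using assms by (simp add: vec2_eq_iff)
    with fix_v True show ?thesis
      by (intro exI[of _ "(M *v v)$2 / v$2"]) (simp add: vec2_eq_iff fixes_line_def cross2_def)
  next
    case False
    with fix_v show ?thesis
      by (intro exI[of _ "(M *v v)$1 / v$1"])
        (simp add: vec2_eq_iff fixes_line_def cross2_def field_simps)
  qed
qed (auto simp: fixes_line_def cross2_def)

lemma fixes_line_mult: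
  fixes v :: "'a::field^2"
  assumes "fixes_line M v" "fixes_line N v"
  shows "fixes_line (M ** N) v"
proof (cases "v = 0")
  case False
  then obtain c d where "M *v v = c *s v" "N *v v = d *s v"
    using assms fixes_line_iff_eigenvector by metis
  then have "(M ** N) *v v = (c * d) *s v"
    by (simp add: matrix_vector_mul_assoc[symmetric] vector_scalar_commute)
  with False show ?thesis using fixes_line_iff_eigenvector by blast
qed (simp add: fixes_line_def cross2_def)

lemma fixes_line_adj2: "fixes_line (adj2 M) v \<longleftrightarrow> fixes_line M v"
proof -
  have "cross2 (adj2 M *v v) v = - cross2 (M *v v) v"
    by (simp add: cross2_def mat2_simps algebra_simps)
  then show ?thesis by (simp add: fixes_line_def)
qed

lemma fixes_line_mat: "fixes_line (mat c) v"
  by (simp add: fixes_line_def cross2_def mat2_simps algebra_simps)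

lemma fixes_line_parallel:
  fixes v w :: "'a::field^2"
  assumes "fixes_line M v" "cross2 v w = 0" "v \<noteq> 0"
  shows "fixes_line M w"
proof -
  obtain c where c: "M *v v = c *s v" using assms fixes_line_iff_eigenvector by blast
  have "v$1 \<noteq> 0 \<or> v$2 \<noteq> 0" using assms(3) by (simp add: vec2_eq_iff)
  then obtain t where t: "w = t *s v"
  proof
    assume "v$1 \<noteq> 0"
    with assms(2) show ?thesis
      by (intro that[of "w$1 / v$1"]) (simp add: vec2_eq_iff cross2_def field_simps)
  next
    assume "v$2 \<noteq> 0"
    with assms(2) show ?thesis
      by (intro that[of "w$2 / v$2"]) (simp add: vec2_eq_iff cross2_def field_simps)
  qed
  have "M *v w = c *s w" by (simp add: t vector_scalar_commute c)
  then show ?thesis by (simp add: fixes_line_def cross2_def algebra_simps)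
qed

lemma cross2_ne_0_if_separated:
  fixes v w :: "'a::field^2"
  assumes "fixes_line M v" "\<not> fixes_line M w" "v \<noteq> 0"
  shows "cross2 v w \<noteq> 0" "cross2 w v \<noteq> 0"
  using fixes_line_parallel[OF assms(1) _ assms(3)] assms(2) cross2_commute[of w v] by auto

lemma fixes_line_vector_10:
  fixes M :: "'a::idom mat2"
  assumes "a \<noteq> 0"
  shows "fixes_line M (vector [a, 0]) \<longleftrightarrow> M$2$1 = 0"
  using assms by (simp add: fixes_line_def cross2_def mat2_simps)

lemma fixes_line_vector_01:
  fixes M :: "'a::idom mat2"
  assumes "b \<noteq> 0"
  shows "fixes_line M (vector [0, b]) \<longleftrightarrow> M$1$2 = 0"
  using assms by (simp add: fixes_line_def cross2_def mat2_simps)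

lemma fixes_line_diagonal_iff:
  fixes M :: "'a::idom mat2"
  assumes "M$2$1 = 0" "M$1$2 = 0"
  shows "fixes_line M w \<longleftrightarrow> M$1$1 = M$2$2 \<or> w$1 = 0 \<or> w$2 = 0"
proof -
  have "cross2 (M *v w) w = (M$1$1 - M$2$2) * w$1 * w$2"
    using assms by (simp add: cross2_def mat2_simps algebra_simps)
  then show ?thesis by (simp add: fixes_line_def)
qed

lemma fixes_line_similar:
  fixes P M :: "'a::field mat2"
  assumes "invertible P"
  shows "fixes_line (P ** M ** matrix_inv P) (P *v w) \<longleftrightarrow> fixes_line M w"
proof -
  have "(P ** M ** matrix_inv P) *v (P *v w) = (P ** M ** (matrix_inv P ** P)) *v w"
    by (simp add: matrix_vector_mul_assoc matrix_mul_assoc)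
  also have "\<dots> = P *v (M *v w)"
    by (simp add: matrix_mul_matrix_inv(2)[OF assms] matrix_mul_rid matrix_vector_mul_assoc)
  finally have "(P ** M ** matrix_inv P) *v (P *v w) = P *v (M *v w)" .
  moreover have "det P \<noteq> 0" using assms by (simp add: invertible_det_nz)
  ultimately show ?thesis by (simp add: fixes_line_def cross2_matrix_vector_mult)
qed

definition conj2 :: "'a::comm_ring_1 mat2 \<Rightarrow> 'a mat2 \<Rightarrow> 'a mat2" where
  "conj2 P M = P ** M ** adj2 P"

lemma conj2_eq_similar: "det P = 1 \<Longrightarrow> conj2 P M = P ** M ** matrix_inv P"
  by (simp add: conj2_def matrix_inv_eq_adj2)

lemma conj2_mult: "det P = 1 \<Longrightarrow> conj2 P (M ** N) = conj2 P M ** conj2 P N"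
  by (simp add: conj2_def matrix_mul_assoc)
    (simp add: matrix_mul_assoc[symmetric] adj2_matrix_mul matrix_mul_rid)

lemma conj2_adj2: "conj2 P (adj2 M) = adj2 (conj2 P M)"
  by (simp add: conj2_def mat2_simps algebra_simps)

lemma conj2_conj2: "conj2 (P ** Q) M = conj2 P (conj2 Q M)"
  by (simp add: conj2_def adj2_mult matrix_mul_assoc)

lemma trace_conj2: "det P = 1 \<Longrightarrow> trace (conj2 P M) = trace M"
  unfolding conj2_def by (metis adj2_matrix_mul matrix_mul_assoc matrix_mul_lid trace_mul_sym)

lemma det_conj2: "det P = 1 \<Longrightarrow> det (conj2 P M) = det M"
  by (simp add: conj2_def det_mul det_adj2)

lemma fixes_line_conj2:
  fixes P M :: "'a::field mat2"
  assumes "det P = 1"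
  shows "fixes_line (conj2 P M) (P *v w) \<longleftrightarrow> fixes_line M w"
  using fixes_line_similar[of P] assms by (simp add: conj2_eq_similar invertible_det_nz)

lemma SL2_normalize_pair:
  fixes u v :: "'a::field^2"
  assumes "cross2 u v \<noteq> 0"
  obtains P where "det P = 1" "P *v u = vector [1, 0]" "P *v v = vector [0, cross2 u v]"
proof -
  define d where "d = cross2 u v"
  define Q :: "'a mat2" where "Q = vector [vector [u$1, v$1 / d], vector [u$2, v$2 / d]]"
  have "d \<noteq> 0" using assms by (simp add: d_def)
  have "det Q = cross2 u v / d"
    by (simp add: det_2 Q_def cross2_def diff_divide_distrib)
  then have det1: "det (adj2 Q) = 1" using \<open>d \<noteq> 0\<close> by (simp add: det_adj2 d_def)
  have d: "u$1 * v$2 - u$2 * v$1 = d" by (simp add: d_def cross2_def)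
  have "(adj2 Q *v u)$1 = (u$1 * v$2 - u$2 * v$1) / d" "(adj2 Q *v v)$2 = u$1 * v$2 - u$2 * v$1"
    by (simp_all add: mat2_simps Q_def diff_divide_distrib algebra_simps)
  moreover have "(adj2 Q *v u)$2 = 0" "(adj2 Q *v v)$1 = 0"
    by (simp_all add: mat2_simps Q_def algebra_simps)
  ultimately have "adj2 Q *v u = vector [1, 0]" "adj2 Q *v v = vector [0, d]"
    using \<open>d \<noteq> 0\<close> by (simp_all add: vec2_eq_iff d)
  with det1 show ?thesis using that d_def by blast
qed

lemma SL2_normalize:
  fixes v :: "'a::field^2"
  assumes "v \<noteq> 0"
  obtains P b where "det P = 1" "b \<noteq> 0" "P *v v = vector [0, b]"
proof -
  obtain w where "cross2 w v \<noteq> 0" using exists_cross2_nonzero assms by blast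
  then show ?thesis using SL2_normalize_pair that by metis
qed

lemma fixes_line_iff_conj2_12:
  fixes P M :: "'a::field mat2"
  assumes "det P = 1" "b \<noteq> 0" "P *v v = vector [0, b]"
  shows "fixes_line M v \<longleftrightarrow> conj2 P M $1$2 = 0"
  using fixes_line_conj2[OF assms(1), of M v] fixes_line_vector_01[OF assms(2)] assms(3) by simp

lemma fixes_line_iff_conj2_21:
  fixes P M :: "'a::field mat2"
  assumes "det P = 1" "a \<noteq> 0" "P *v v = vector [a, 0]"
  shows "fixes_line M v \<longleftrightarrow> conj2 P M $2$1 = 0"
  using fixes_line_conj2[OF assms(1), of M v] fixes_line_vector_10[OF assms(2)] assms(3) by simp

lemma exists_fixed_line:
  fixes M :: "complex mat2"
  obtains v where "v \<noteq> 0" "fixes_line M v"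
proof (cases "M$1$2 = 0")
  case True
  then have "fixes_line M (vector [0, 1])" by (simp add: fixes_line_vector_01)
  moreover have "vector [0, 1] \<noteq> (0 :: complex^2)" by (simp add: vec2_eq_iff)
  ultimately show ?thesis using that by blast
next
  case False
  define t where "t = M$1$1 + M$2$2"
  txt \<open>\<open>l\<close> is an eigenvalue, i.e. a root of the characteristic polynomial.\<close>
  define l where "l = (t + csqrt (t^2 - 4 * det M)) / 2"
  have "2 * l - t = csqrt (t^2 - 4 * det M)" by (simp add: l_def field_simps)
  then have "(2 * l - t)^2 = t^2 - 4 * det M" by (simp add: power2_csqrt)
  then have l: "l^2 - t * l + det M = 0" by algebra
  define v :: "complex^2" where "v = vector [M$1$2, l - M$1$1]"
  have "cross2 (M *v v) v = M$1$2 * (l^2 - t * l + det M)"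
    by (simp add: v_def t_def cross2_def mat2_simps algebra_simps power2_eq_square)
  then have "fixes_line M v" using l by (simp add: fixes_line_def)
  moreover have "v \<noteq> 0" using False by (simp add: v_def vec2_eq_iff)
  ultimately show ?thesis using that by blast
qed

lemma fixes_all_lines_if_three:
  fixes M :: "'a::field mat2"
  assumes "fixes_line M u" "fixes_line M v" "fixes_line M w"
    and "cross2 u v \<noteq> 0" "cross2 u w \<noteq> 0" "cross2 v w \<noteq> 0"
  shows "fixes_line M z"
proof -
  obtain P where P: "det P = 1" "P *v u = vector [1, 0]" "P *v v = vector [0, cross2 u v]"
    using SL2_normalize_pair[OF assms(4)] .
  let ?C = "conj2 P M"
  have C21: "?C$2$1 = 0" using fixes_line_iff_conj2_21[OF P(1) _ P(2)] assms(1) by simp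
  have C12: "?C$1$2 = 0" using fixes_line_iff_conj2_12[OF P(1) assms(4) P(3)] assms(2) by simp
  have "cross2 (P *v u) (P *v w) \<noteq> 0" "cross2 (P *v v) (P *v w) \<noteq> 0"
    using assms(5,6) P(1) by (simp_all add: cross2_matrix_vector_mult)
  then have "(P *v w)$1 \<noteq> 0" "(P *v w)$2 \<noteq> 0" using P(2,3) by (auto simp: cross2_def)
  moreover have "fixes_line ?C (P *v w)" using fixes_line_conj2[OF P(1)] assms(3) by simp
  ultimately have "?C$1$1 = ?C$2$2" using fixes_line_diagonal_iff[OF C21 C12] by blast
  then have "fixes_line ?C (P *v z)" using fixes_line_diagonal_iff[OF C21 C12] by blast
  then show ?thesis using fixes_line_conj2[OF P(1)] by simp
qed

section \<open>Commutator traces and triple traces\<close>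

lemma trace_commutator_lower:
  fixes X Y :: "'a::comm_ring_1 mat2"
  assumes "X$1$2 = 0"
  shows "trace (X ** Y ** adj2 X ** adj2 Y) = 2 * det X * det Y +
    Y$1$2 * ((X$2$1)^2 * Y$1$2 - (X$2$2 - X$1$1)^2 * Y$2$1
      - (X$2$2 - X$1$1) * X$2$1 * (Y$1$1 - Y$2$2))"
  by (simp add: mat2_simps assms power2_eq_square algebra_simps)

lemma trace_commutator_conj2:
  assumes "det P = 1"
  shows "trace (conj2 P X ** conj2 P Y ** adj2 (conj2 P X) ** adj2 (conj2 P Y))
       = trace (X ** Y ** adj2 X ** adj2 Y)"
  by (simp add: conj2_mult[OF assms, symmetric] conj2_adj2[symmetric] trace_conj2[OF assms])

lemma trace_triple_conj2:
  assumes "det P = 1"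
  shows "trace (conj2 P X ** conj2 P Y ** conj2 P Z) = trace (X ** Y ** Z)"
  by (simp add: conj2_mult[OF assms, symmetric] trace_conj2[OF assms])

lemma trace_triple_lower:
  fixes X Y Z :: "'a::comm_ring_1 mat2"
  assumes "X$1$2 = 0" "Y$1$2 = 0" "Z$1$2 = 0"
  shows "trace (X ** Y ** Z) = trace (Z ** Y ** X)"
  by (simp add: mat2_simps assms algebra_simps)

lemma trace_triple_diagonal:
  fixes X Y Z :: "'a::comm_ring_1 mat2"
  assumes "X$2$1 = 0" "X$1$2 = 0" "Y$2$1 = 0" "Z$1$2 = 0"
  shows "trace (X ** Y ** Z) - trace (Z ** Y ** X) = (X$1$1 - X$2$2) * Y$1$2 * Z$2$1"
  by (simp add: mat2_simps assms algebra_simps)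

lemma common_fixed_line_if_lower:
  fixes X Y :: "complex mat2"
  assumes X12: "X$1$2 = 0" and "det X = 1" "det Y = 1"
    and trace: "trace (X ** Y ** adj2 X ** adj2 Y) = 2"
  shows "\<exists>w. w \<noteq> 0 \<and> fixes_line X w \<and> fixes_line Y w"
proof (cases "Y$1$2 = 0")
  case True
  then have "fixes_line X (vector [0, 1])" "fixes_line Y (vector [0, 1])"
    using X12 by (simp_all add: fixes_line_vector_01)
  moreover have "vector [0, 1] \<noteq> (0 :: complex^2)" by (simp add: vec2_eq_iff)
  ultimately show ?thesis by blast
next
  case False
  define b where "b = X$2$1"
  define c where "c = X$2$2 - X$1$1"
  txt \<open>\<open>K\<close> is \<open>cross2 (Y *v w) w\<close> for the second eigenvector \<open>w = (c, -b)\<close> of \<open>X\<close>.\<close>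
  define K where "K = b^2 * Y$1$2 - c^2 * Y$2$1 - c * b * (Y$1$1 - Y$2$2)"
  have "Y$1$2 * K = 0"
    using trace_commutator_lower[OF X12, of Y] assms(2-4) by (simp add: K_def b_def c_def)
  with False have K: "K = 0" by simp
  show ?thesis
  proof (cases "c = 0")
    case True
    with K False have "b = 0" by (simp add: K_def)
    obtain w where "w \<noteq> 0" "fixes_line Y w" using exists_fixed_line by blast
    moreover have "fixes_line X w"
      using fixes_line_diagonal_iff[OF _ X12] \<open>b = 0\<close> True by (simp add: b_def c_def)
    ultimately show ?thesis by blast
  next
    case False
    define w :: "complex^2" where "w = vector [c, - b]"
    have "w \<noteq> 0" using False by (simp add: w_def vec2_eq_iff)
    moreover have "fixes_line X w"
      by (simp add: w_def b_def c_def X12 fixes_line_def cross2_def mat2_simps algebra_simps)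
    moreover have "cross2 (Y *v w) w = K"
      by (simp add: w_def K_def cross2_def mat2_simps algebra_simps power2_eq_square)
    then have "fixes_line Y w" using K by (simp add: fixes_line_def)
    ultimately show ?thesis by blast
  qed
qed

lemma trace_commutator_eq_2_iff:
  fixes X Y :: "complex mat2"
  assumes "det X = 1" "det Y = 1"
  shows "trace (X ** Y ** adj2 X ** adj2 Y) = 2
    \<longleftrightarrow> (\<exists>v. v \<noteq> 0 \<and> fixes_line X v \<and> fixes_line Y v)"
proof
  assume trace: "trace (X ** Y ** adj2 X ** adj2 Y) = 2"
  obtain u where "u \<noteq> 0" "fixes_line X u" using exists_fixed_line by blast
  then obtain P b where P: "det P = 1" "b \<noteq> 0" "P *v u = vector [0, b]"
    using SL2_normalize by blast
  have "conj2 P X $1$2 = 0" using fixes_line_iff_conj2_12[OF P] \<open>fixes_line X u\<close> by simp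
  moreover have "det (conj2 P X) = 1" "det (conj2 P Y) = 1"
    using det_conj2[OF P(1)] assms by simp_all
  moreover have "trace (conj2 P X ** conj2 P Y ** adj2 (conj2 P X) ** adj2 (conj2 P Y)) = 2"
    using trace by (simp add: trace_commutator_conj2[OF P(1)])
  ultimately obtain w where w: "w \<noteq> 0" "fixes_line (conj2 P X) w" "fixes_line (conj2 P Y) w"
    using common_fixed_line_if_lower by blast
  have Pv: "P *v (adj2 P *v w) = w"
    by (simp add: matrix_vector_mul_assoc matrix_mul_adj2 P(1))
  then have "adj2 P *v w \<noteq> 0" using w(1) by auto
  moreover have "fixes_line X (adj2 P *v w)" "fixes_line Y (adj2 P *v w)"
    using w(2,3) fixes_line_conj2[OF P(1)] Pv by metis+
  ultimately show "\<exists>v. v \<noteq> 0 \<and> fixes_line X v \<and> fixes_line Y v" by blast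
next
  assume "\<exists>v. v \<noteq> 0 \<and> fixes_line X v \<and> fixes_line Y v"
  then obtain v where "v \<noteq> 0" "fixes_line X v" "fixes_line Y v" by blast
  then obtain P b where P: "det P = 1" "b \<noteq> 0" "P *v v = vector [0, b]"
    using SL2_normalize by blast
  have "conj2 P X $1$2 = 0" "conj2 P Y $1$2 = 0"
    using fixes_line_iff_conj2_12[OF P] \<open>fixes_line X v\<close> \<open>fixes_line Y v\<close> by simp_all
  then show "trace (X ** Y ** adj2 X ** adj2 Y) = 2"
    using trace_commutator_lower[of "conj2 P X" "conj2 P Y"] assms
    by (simp add: trace_commutator_conj2[OF P(1)] det_conj2[OF P(1)])
qed

lemma trace_rev_eq_if_common_fixed_line:
  fixes X Y Z :: "'a::field mat2"
  assumes "v \<noteq> 0" "fixes_line X v" "fixes_line Y v" "fixes_line Z v"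
  shows "trace (X ** Y ** Z) = trace (Z ** Y ** X)"
proof -
  obtain P b where P: "det P = 1" "b \<noteq> 0" "P *v v = vector [0, b]"
    using SL2_normalize assms(1) by blast
  have "conj2 P X $1$2 = 0" "conj2 P Y $1$2 = 0" "conj2 P Z $1$2 = 0"
    using fixes_line_iff_conj2_12[OF P] assms(2-4) by simp_all
  then show ?thesis
    using trace_triple_lower by (metis trace_triple_conj2[OF P(1)])
qed

lemma trace_rev_ne_if_pairwise_common_fixed_lines:
  fixes X Y Z :: "'a::field mat2"
  assumes "v1 \<noteq> 0" "fixes_line X v1" "fixes_line Y v1"
    and "v2 \<noteq> 0" "fixes_line X v2" "fixes_line Z v2"
    and "v3 \<noteq> 0" "fixes_line Y v3" "fixes_line Z v3"
    and no_common:
      "\<And>v. v \<noteq> 0 \<Longrightarrow> fixes_line X v \<Longrightarrow> fixes_line Y v \<Longrightarrow> fixes_line Z v \<Longrightarrow> False"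
  shows "trace (X ** Y ** Z) \<noteq> trace (Z ** Y ** X)"
proof -
  have Y2: "\<not> fixes_line Y v2" and Z1: "\<not> fixes_line Z v1" using assms no_common by blast+
  have "cross2 v1 v2 \<noteq> 0" using cross2_ne_0_if_separated(1)[OF assms(3) Y2 assms(1)] .
  then obtain P where P: "det P = 1" "P *v v1 = vector [1, 0]" "P *v v2 = vector [0, cross2 v1 v2]"
    by (rule SL2_normalize_pair)
  note line1 = fixes_line_iff_conj2_21[OF P(1) _ P(2)]
    and line2 = fixes_line_iff_conj2_12[OF P(1) \<open>cross2 v1 v2 \<noteq> 0\<close> P(3)]
  have X: "conj2 P X $2$1 = 0" "conj2 P X $1$2 = 0" using line1 line2 assms(2,5) by simp_all
  have Y: "conj2 P Y $2$1 = 0" "conj2 P Y $1$2 \<noteq> 0" using line1 line2 assms(3) Y2 by simp_all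
  have Z: "conj2 P Z $1$2 = 0" "conj2 P Z $2$1 \<noteq> 0" using line1 line2 assms(6) Z1 by simp_all
  have "conj2 P X $1$1 \<noteq> conj2 P X $2$2"
  proof
    assume "conj2 P X $1$1 = conj2 P X $2$2"
    then have "fixes_line (conj2 P X) (P *v v3)" using fixes_line_diagonal_iff[OF X] by blast
    then have "fixes_line X v3" using fixes_line_conj2[OF P(1)] by blast
    then show False using no_common assms(7-9) by blast
  qed
  then have "trace (conj2 P X ** conj2 P Y ** conj2 P Z)
      \<noteq> trace (conj2 P Z ** conj2 P Y ** conj2 P X)"
    using trace_triple_diagonal[OF X Y(1) Z(1)] Y(2) Z(2) by auto
  then show ?thesis by (simp add: trace_triple_conj2[OF P(1)])
qed

lemma commutator_or_triple_trace_witness: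
  fixes X Y Z :: "complex mat2"
  assumes "det X = 1" "det Y = 1" "det Z = 1"
    and no_common:
      "\<And>v. v \<noteq> 0 \<Longrightarrow> fixes_line X v \<Longrightarrow> fixes_line Y v \<Longrightarrow> fixes_line Z v \<Longrightarrow> False"
  shows "trace (X ** Y ** adj2 X ** adj2 Y) \<noteq> 2 \<or> trace (X ** Z ** adj2 X ** adj2 Z) \<noteq> 2
    \<or> trace (Y ** Z ** adj2 Y ** adj2 Z) \<noteq> 2 \<or> trace (X ** Y ** Z) \<noteq> trace (Z ** Y ** X)"
proof (rule ccontr)
  assume "\<not> ?thesis"
  then have "\<exists>v. v \<noteq> 0 \<and> fixes_line X v \<and> fixes_line Y v"
    and "\<exists>v. v \<noteq> 0 \<and> fixes_line X v \<and> fixes_line Z v"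
    and "\<exists>v. v \<noteq> 0 \<and> fixes_line Y v \<and> fixes_line Z v"
    and trace: "trace (X ** Y ** Z) = trace (Z ** Y ** X)"
    using trace_commutator_eq_2_iff assms(1-3) by auto
  then obtain v1 v2 v3 where "v1 \<noteq> 0" "fixes_line X v1" "fixes_line Y v1"
    and "v2 \<noteq> 0" "fixes_line X v2" "fixes_line Z v2"
    and "v3 \<noteq> 0" "fixes_line Y v3" "fixes_line Z v3"
    by blast
  from trace_rev_ne_if_pairwise_common_fixed_lines[OF this no_common] trace show False ..
qed

section \<open>Common eigenvectors of tuples\<close>

definition has_common_eigenvector :: "'a::comm_ring_1 mat2^'n \<Rightarrow> bool" where
  "has_common_eigenvector A \<longleftrightarrow> (\<exists>v. v \<noteq> 0 \<and> (\<forall>i. fixes_line (A$i) v))"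

lemma all_triple_iff: "(\<forall>i::3. P (triple X Y Z $ i)) \<longleftrightarrow> P X \<and> P Y \<and> P Z"
  by (auto simp add: forall_3 triple_def)

lemma has_common_eigenvector_triple:
  "has_common_eigenvector (triple X Y Z)
     \<longleftrightarrow> (\<exists>v. v \<noteq> 0 \<and> fixes_line X v \<and> fixes_line Y v \<and> fixes_line Z v)"
  by (auto simp: has_common_eigenvector_def triple_def forall_3)

lemma has_common_eigenvector_iff_triples:
  fixes A :: "'a::field mat2^'n"
  shows "has_common_eigenvector A
    \<longleftrightarrow> (\<forall>j k l. has_common_eigenvector (triple (A$j) (A$k) (A$l)))"
proof (intro iffI allI)
  show "has_common_eigenvector (triple (A$j) (A$k) (A$l))" if "has_common_eigenvector A" for j k l
    using that unfolding has_common_eigenvector_triple by (auto simp: has_common_eigenvector_def)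
next
  assume "\<forall>j k l. has_common_eigenvector (triple (A$j) (A$k) (A$l))"
  then have common:
    "\<And>j k l. \<exists>v. v \<noteq> 0 \<and> fixes_line (A$j) v \<and> fixes_line (A$k) v \<and> fixes_line (A$l) v"
    by (simp add: has_common_eigenvector_triple)
  show "has_common_eigenvector A"
  proof (rule ccontr)
    txt \<open>Otherwise some non-scalar \<open>A$j\<close> would fix three pairwise independent lines.\<close>
    assume "\<not> has_common_eigenvector A"
    then have moves: "\<And>v. v \<noteq> 0 \<Longrightarrow> \<exists>i. \<not> fixes_line (A$i) v"
      by (auto simp: has_common_eigenvector_def)
    have "vector [1, 0] \<noteq> (0 :: 'a^2)" by (simp add: vec2_eq_iff)
    then obtain j z where "\<not> fixes_line (A$j) z" using moves by blast
    obtain v1 where v1: "v1 \<noteq> 0" "fixes_line (A$j) v1" using common[of j j j] by blast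
    obtain k where k: "\<not> fixes_line (A$k) v1" using moves[OF v1(1)] by blast
    obtain v2 where v2: "v2 \<noteq> 0" "fixes_line (A$j) v2" "fixes_line (A$k) v2"
      using common[of j k k] by blast
    obtain l where l: "\<not> fixes_line (A$l) v2" using moves[OF v2(1)] by blast
    obtain v3 where v3: "v3 \<noteq> 0" "fixes_line (A$j) v3" "fixes_line (A$k) v3" "fixes_line (A$l) v3"
      using common[of j k l] by blast
    have "cross2 v1 v2 \<noteq> 0" using cross2_ne_0_if_separated(2)[OF v2(3) k v2(1)] .
    moreover have "cross2 v1 v3 \<noteq> 0" using cross2_ne_0_if_separated(2)[OF v3(3) k v3(1)] .
    moreover have "cross2 v2 v3 \<noteq> 0" using cross2_ne_0_if_separated(2)[OF v3(4) l v3(1)] .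
    ultimately have "fixes_line (A$j) z" using fixes_all_lines_if_three v1(2) v2(2) v3(2) by blast
    with \<open>\<not> fixes_line (A$j) z\<close> show False ..
  qed
qed

lemma sigma_eq_trace_commutator:
  "det (A$j) = 1 \<Longrightarrow> det (A$k) = 1
    \<Longrightarrow> sigma A j k = trace (A$j ** A$k ** adj2 (A$j) ** adj2 (A$k)) - 2"
  by (simp add: sigma_def matrix_inv_eq_adj2)

lemma no_common_eigenvector_iff_sigma_Delta:
  fixes A :: "cmat2^'n"
  assumes det: "\<And>i. det (A$i) = 1"
  shows "\<not> has_common_eigenvector A \<longleftrightarrow> (\<exists>j k l. sigma A j k \<noteq> 0 \<or> Delta A j k l \<noteq> 0)"
proof
  have sigma: "sigma A a b \<noteq> 0 \<longleftrightarrow> trace (A$a ** A$b ** adj2 (A$a) ** adj2 (A$b)) \<noteq> 2"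
    for a b
    by (simp add: sigma_eq_trace_commutator det)
  have Delta: "Delta A a b c \<noteq> 0 \<longleftrightarrow> trace (A$a ** A$b ** A$c) \<noteq> trace (A$c ** A$b ** A$a)"
    for a b c
    by (simp add: Delta_def)
  assume "\<not> has_common_eigenvector A"
  then obtain j k l where "\<not> has_common_eigenvector (triple (A$j) (A$k) (A$l))"
    using has_common_eigenvector_iff_triples by blast
  then have "trace (A$j ** A$k ** adj2 (A$j) ** adj2 (A$k)) \<noteq> 2
    \<or> trace (A$j ** A$l ** adj2 (A$j) ** adj2 (A$l)) \<noteq> 2
    \<or> trace (A$k ** A$l ** adj2 (A$k) ** adj2 (A$l)) \<noteq> 2
    \<or> trace (A$j ** A$k ** A$l) \<noteq> trace (A$l ** A$k ** A$j)"
    by (intro commutator_or_triple_trace_witness det) (auto simp: has_common_eigenvector_triple)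
  then show "\<exists>j k l. sigma A j k \<noteq> 0 \<or> Delta A j k l \<noteq> 0"
    unfolding sigma Delta by blast
next
  assume "\<exists>j k l. sigma A j k \<noteq> 0 \<or> Delta A j k l \<noteq> 0"
  then obtain j k l where jkl: "sigma A j k \<noteq> 0 \<or> Delta A j k l \<noteq> 0" by blast
  show "\<not> has_common_eigenvector A"
  proof
    assume "has_common_eigenvector A"
    then obtain v where v: "v \<noteq> 0" "\<And>i. fixes_line (A$i) v"
      by (auto simp: has_common_eigenvector_def)
    then have "sigma A j k = 0"
      using trace_commutator_eq_2_iff det by (auto simp: sigma_eq_trace_commutator det)
    moreover have "Delta A j k l = 0"
      using trace_rev_eq_if_common_fixed_line[OF v(1) v(2) v(2) v(2)] by (simp add: Delta_def)
    ultimately show False using jkl by simp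
  qed
qed

section \<open>Irreducibility and triangularisation\<close>

lemma group_SL2_group: "group SL2_group"
proof (rule groupI)
  fix M assume "M \<in> carrier SL2_group"
  then have "adj2 M \<in> carrier SL2_group" "adj2 M \<otimes>\<^bsub>SL2_group\<^esub> M = \<one>\<^bsub>SL2_group\<^esub>"
    by (simp_all add: SL2_group_def SL2_def det_adj2 adj2_matrix_mul)
  then show "\<exists>N \<in> carrier SL2_group. N \<otimes>\<^bsub>SL2_group\<^esub> M = \<one>\<^bsub>SL2_group\<^esub>" by blast
qed (simp_all add: SL2_group_def SL2_def det_mul matrix_mul_assoc matrix_mul_lid)

lemma inv_SL2_group: "M \<in> SL2 \<Longrightarrow> inv\<^bsub>SL2_group\<^esub> M = adj2 M"
  by (rule group.inv_equality[OF group_SL2_group])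
    (simp_all add: SL2_group_def SL2_def det_adj2 adj2_matrix_mul)

lemma subgroup_fixes_line: "subgroup {M \<in> SL2. fixes_line M v} SL2_group"
proof (rule subgroup.intro)
  show "inv\<^bsub>SL2_group\<^esub> M \<in> {M \<in> SL2. fixes_line M v}"
    if "M \<in> {M \<in> SL2. fixes_line M v}" for M
    using that by (simp add: inv_SL2_group) (simp add: SL2_def det_adj2 fixes_line_adj2)
qed (auto simp: SL2_group_def SL2_def det_mul fixes_line_mult fixes_line_mat)

lemma fixes_line_hom_SL2:
  assumes "group \<Gamma>" "\<rho> \<in> hom \<Gamma> SL2_group" "S \<subseteq> carrier \<Gamma>" "generate \<Gamma> S = carrier \<Gamma>"
    and "\<And>s. s \<in> S \<Longrightarrow> fixes_line (\<rho> s) v" "x \<in> carrier \<Gamma>"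
  shows "fixes_line (\<rho> x) v"
proof -
  interpret group_hom \<Gamma> SL2_group \<rho>
    using assms(1,2) group_SL2_group by (simp add: group_hom_def group_hom_axioms_def)
  have "\<rho> ` S \<subseteq> {M \<in> SL2. fixes_line M v}"
    using assms(3,5) hom_closed by (auto simp: SL2_group_def)
  then have "generate SL2_group (\<rho> ` S) \<subseteq> {M \<in> SL2. fixes_line M v}"
    by (rule H.generate_subgroup_incl[OF _ subgroup_fixes_line])
  then show ?thesis using generate_img[OF assms(3)] assms(4,6) by auto
qed

lemma cross2_decompose:
  fixes u v z :: "'a::field^2"
  assumes "cross2 u v \<noteq> 0"
  shows "z = (cross2 z v / cross2 u v) *s u + (cross2 u z / cross2 u v) *s v"
proof -
  have "cross2 z v * u$1 + cross2 u z * v$1 = cross2 u v * z$1"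
    and "cross2 z v * u$2 + cross2 u z * v$2 = cross2 u v * z$2"
    by (simp_all add: cross2_def algebra_simps)
  with assms show ?thesis by (simp add: vec2_eq_iff field_simps)
qed

lemma cross2_eq_0_if_proper_subspace:
  fixes V :: "('a::field^2) set"
  assumes "vec.subspace V" "V \<noteq> UNIV" "u \<in> V" "v \<in> V"
  shows "cross2 u v = 0"
proof (rule ccontr)
  assume "cross2 u v \<noteq> 0"
  then have "z \<in> V" for z
    using cross2_decompose[of u v z] vec.subspace_add[OF assms(1)] vec.subspace_scale[OF assms(1)]
      assms(3,4)
    by metis
  with assms(2) show False by auto
qed

lemma span_singleton_ne_UNIV:
  fixes v :: "'a::field^2"
  assumes "v \<noteq> 0"
  shows "vec.span {v} \<noteq> UNIV"
proof
  assume "vec.span {v} = UNIV"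
  obtain w where "cross2 w v \<noteq> 0" using exists_cross2_nonzero assms by blast
  moreover have "w \<in> vec.span {v}" using \<open>vec.span {v} = UNIV\<close> by simp
  ultimately show False by (auto simp: vec.span_singleton cross2_scale_left)
qed

lemma span_singleton_invariant:
  fixes v :: "'a::field^2"
  assumes "v \<noteq> 0" "fixes_line M v" "u \<in> vec.span {v}"
  shows "M *v u \<in> vec.span {v}"
proof -
  obtain k where u: "u = k *s v" using assms(3) by (auto simp: vec.span_singleton)
  obtain c where "M *v v = c *s v" using assms(1,2) fixes_line_iff_eigenvector by blast
  then have "M *v u = (k * c) *s v" by (simp add: u vector_scalar_commute mult.commute)
  then show ?thesis unfolding vec.span_singleton by (rule range_eqI)
qed

lemma irreducible_rep_iff_no_common_eigenvector:
  fixes \<rho> :: "'g \<Rightarrow> cmat2" and \<epsilon> :: "'n::finite \<Rightarrow> 'g"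
  assumes "group \<Gamma>" "\<rho> \<in> hom \<Gamma> SL2_group" "range \<epsilon> \<subseteq> carrier \<Gamma>"
    and "generate \<Gamma> (range \<epsilon>) = carrier \<Gamma>"
  shows "irreducible_rep \<Gamma> \<rho> \<longleftrightarrow> \<not> has_common_eigenvector (\<chi> i. \<rho> (\<epsilon> i))"
proof
  assume irr: "irreducible_rep \<Gamma> \<rho>"
  show "\<not> has_common_eigenvector (\<chi> i. \<rho> (\<epsilon> i))"
  proof
    assume "has_common_eigenvector (\<chi> i. \<rho> (\<epsilon> i))"
    then obtain v where v: "v \<noteq> 0" "\<And>i. fixes_line (\<rho> (\<epsilon> i)) v"
      by (auto simp: has_common_eigenvector_def)
    have "\<rho> x *v u \<in> vec.span {v}" if "x \<in> carrier \<Gamma>" "u \<in> vec.span {v}" for x u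
      using span_singleton_invariant[OF v(1) fixes_line_hom_SL2[OF assms(1-4) _ that(1)]] v(2) that(2)
      by blast
    moreover have "vec.span {v} \<noteq> {0}" using v(1) vec.span_base[of v "{v}"] by auto
    ultimately show False
      using irr span_singleton_ne_UNIV[OF v(1)] unfolding irreducible_rep_def by blast
  qed
next
  assume none: "\<not> has_common_eigenvector (\<chi> i. \<rho> (\<epsilon> i))"
  show "irreducible_rep \<Gamma> \<rho>"
    unfolding irreducible_rep_def
  proof
    assume "\<exists>V. vec.subspace V \<and> V \<noteq> {0} \<and> V \<noteq> UNIV
      \<and> (\<forall>x\<in>carrier \<Gamma>. \<forall>v\<in>V. \<rho> x *v v \<in> V)"
    then obtain V :: "(complex^2) set" where V: "vec.subspace V" "V \<noteq> {0}" "V \<noteq> UNIV"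
      and invariant: "\<forall>x\<in>carrier \<Gamma>. \<forall>v\<in>V. \<rho> x *v v \<in> V" by blast
    obtain v where "v \<in> V" "v \<noteq> 0" using V(1,2) vec.subspace_0 by blast
    have "fixes_line (\<rho> (\<epsilon> i)) v" for i
    proof -
      have "\<rho> (\<epsilon> i) *v v \<in> V" using invariant assms(3) \<open>v \<in> V\<close> by auto
      then show ?thesis
        unfolding fixes_line_def by (rule cross2_eq_0_if_proper_subspace[OF V(1,3) _ \<open>v \<in> V\<close>])
    qed
    with \<open>v \<noteq> 0\<close> none show False by (auto simp: has_common_eigenvector_def)
  qed
qed

text \<open>In the numeral type \<open>2\<close> the element \<open>2\<close> is \<open>0\<close>, so \<open>2 < 1\<close>: the entry that
  \<open>upper_triangular2\<close> forces to vanish is the one at index \<open>1, 2\<close>.\<close>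
lemma upper_triangular2_iff: "upper_triangular2 M \<longleftrightarrow> M$1$2 = 0"
proof -
  have "(2::2) < 1" by (simp add: less_bit0_def bit0.Rep_1 bit0.Rep_numeral)
  then show ?thesis unfolding upper_triangular2_def by (auto simp add: forall_2)
qed

lemma similar_upper_triangular_iff_common_eigenvector:
  "similar_upper_triangular A \<longleftrightarrow> has_common_eigenvector A"
proof
  assume "similar_upper_triangular A"
  then obtain P :: cmat2 where P: "invertible P" "\<And>i. (P ** A$i ** matrix_inv P)$1$2 = 0"
    unfolding similar_upper_triangular_def upper_triangular2_iff by blast
  define v where "v = matrix_inv P *v vector [0, 1]"
  have Pv: "P *v v = vector [0, 1]"
    by (simp add: v_def matrix_vector_mul_assoc matrix_mul_matrix_inv(1)[OF P(1)])
  moreover have "vector [0, 1] \<noteq> (0 :: complex^2)" by (simp add: vec2_eq_iff)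
  ultimately have "v \<noteq> 0" by (metis matrix_vector_mult_0_right)
  moreover have "fixes_line (A$i) v" for i
  proof -
    have "fixes_line (P ** A$i ** matrix_inv P) (P *v v)"
      using fixes_line_vector_01[of "1::complex"] P(2) Pv by simp
    then show ?thesis using fixes_line_similar[OF P(1)] by blast
  qed
  ultimately show "has_common_eigenvector A" by (auto simp: has_common_eigenvector_def)
next
  assume "has_common_eigenvector A"
  then obtain v where v: "v \<noteq> 0" "\<And>i. fixes_line (A$i) v"
    by (auto simp: has_common_eigenvector_def)
  then obtain P b where P: "det P = 1" "b \<noteq> 0" "P *v v = vector [0, b]"
    using SL2_normalize by blast
  then have "invertible P" by (simp add: invertible_det_nz)
  moreover have "(P ** A$i ** matrix_inv P)$1$2 = 0" for i
    using fixes_line_iff_conj2_12[OF P] v(2) conj2_eq_similar[OF P(1)] by simp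
  ultimately show "similar_upper_triangular A"
    unfolding similar_upper_triangular_def upper_triangular2_iff by blast
qed

section \<open>Stability\<close>

lemma SL2_tuples_iff: "A \<in> SL2_tuples \<longleftrightarrow> (\<forall>i. A$i \<in> SL2)"
  by (simp add: SL2_tuples_def)

lemma conj_act_SL2: "g \<in> SL2 \<Longrightarrow> conj_act g A = (\<chi> i. conj2 g (A$i))"
  by (simp add: conj_act_def SL2_def conj2_eq_similar)

lemma conj2_mult_right: "det g = 1 \<Longrightarrow> conj2 g M ** g = g ** M"
  unfolding conj2_def by (metis adj2_matrix_mul matrix_mul_assoc matrix_mul_rid)

lemma tendsto_matrix_mult:
  fixes f :: "'a \<Rightarrow> 'b::real_normed_algebra_1^'k^'m" and g :: "'a \<Rightarrow> 'b^'n^'k"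
  assumes "(f \<longlongrightarrow> a) F" "(g \<longlongrightarrow> b) F"
  shows "((\<lambda>x. f x ** g x) \<longlongrightarrow> a ** b) F"
  unfolding matrix_matrix_mult_def
  by (intro tendsto_vec_lambda tendsto_sum tendsto_mult tendsto_vec_nth assms)

lemma tendsto_adj2:
  fixes f :: "'a \<Rightarrow> 'b::real_normed_field mat2"
  assumes "(f \<longlongrightarrow> a) F"
  shows "((\<lambda>x. adj2 (f x)) \<longlongrightarrow> adj2 a) F"
proof (intro vec_tendstoI)
  fix i j :: 2
  have "i = 1 \<or> i = 2" "j = 1 \<or> j = 2" by (rule exhaust_2)+
  then show "((\<lambda>x. adj2 (f x) $ i $ j) \<longlongrightarrow> adj2 a $ i $ j) F"
    by (elim disjE; simp; intro tendsto_intros assms)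
qed

lemma tendsto_det:
  fixes f :: "'a \<Rightarrow> 'b::real_normed_field^'n^'n"
  assumes "(f \<longlongrightarrow> a) F"
  shows "((\<lambda>x. det (f x)) \<longlongrightarrow> det a) F"
  unfolding det_def
  by (intro tendsto_sum tendsto_mult tendsto_const tendsto_prod tendsto_vec_nth assms)

lemma closed_SL2: "closed SL2"
proof -
  have "continuous_on UNIV (det :: cmat2 \<Rightarrow> complex)"
    unfolding continuous_on_def by (intro ballI tendsto_det tendsto_ident_at)
  then show ?thesis unfolding SL2_def by (rule closed_Collect_eq[OF _ continuous_on_const])
qed

lemma closed_SL2_tuples: "closed (SL2_tuples :: (cmat2^'n) set)"
proof -
  have "closed (\<Inter>i. (\<lambda>A :: cmat2^'n. A$i) -` SL2)"
    by (intro closed_INT ballI closed_vimage_vec_nth closed_SL2)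
  moreover have "SL2_tuples = (\<Inter>i. (\<lambda>A :: cmat2^'n. A$i) -` SL2)"
    by (auto simp: SL2_tuples_iff)
  ultimately show ?thesis by simp
qed

lemma continuous_on_conj2_tuple: "continuous_on S (\<lambda>g. \<chi> i. conj2 g (A$i :: cmat2))"
  unfolding continuous_on_def conj2_def
  by (intro ballI tendsto_vec_lambda tendsto_matrix_mult tendsto_adj2 tendsto_ident_at tendsto_const)

lemma stable_iff_bounded_preimages:
  fixes A :: "cmat2^'n"
  assumes A: "A \<in> SL2_tuples"
  shows "stable A
    \<longleftrightarrow> (\<forall>K. compact K \<longrightarrow> K \<subseteq> SL2_tuples \<longrightarrow> bounded {g \<in> SL2. conj_act g A \<in> K})"
proof (intro iffI allI impI)
  fix K :: "(cmat2^'n) set"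
  assume "stable A" "compact K" "K \<subseteq> SL2_tuples"
  then have "compactin (top_of_set SL2) {g \<in> topspace (top_of_set SL2). conj_act g A \<in> K}"
    unfolding stable_def by (intro compactin_proper_map_preimage) (auto simp: compactin_subtopology)
  then show "bounded {g \<in> SL2. conj_act g A \<in> K}"
    by (simp add: compactin_subtopology compact_imp_bounded)
next
  assume bounded:
    "\<forall>K. compact K \<longrightarrow> K \<subseteq> SL2_tuples \<longrightarrow> bounded {g \<in> SL2. conj_act g A \<in> K}"
  show "stable A"
    unfolding stable_def
  proof (rule compact_imp_proper_map)
    show "k_space (top_of_set (SL2_tuples :: (cmat2^'n) set))"
      by (rule k_space_closed_subtopology[OF k_space_euclideanreal])
        (simp add: closed_SL2_tuples closed_closedin[symmetric])
    show "kc_space (top_of_set (SL2_tuples :: (cmat2^'n) set))"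
      by (rule kc_space_subtopology[OF kc_space_euclidean])
    show "(\<lambda>g. conj_act g A) \<in> topspace (top_of_set SL2) \<rightarrow> topspace (top_of_set SL2_tuples)"
      using A by (auto simp: SL2_tuples_iff conj_act_SL2 SL2_def det_conj2)
    show "continuous_map (top_of_set SL2) (top_of_set SL2_tuples) (\<lambda>g. conj_act g A)
        \<or> kc_space (top_of_set SL2)"
      by (intro disjI2 kc_space_subtopology kc_space_euclidean)
  next
    fix K :: "(cmat2^'n) set" assume "compactin (top_of_set SL2_tuples) K"
    then have K: "compact K" "K \<subseteq> SL2_tuples" by (simp_all add: compactin_subtopology)
    have "{g \<in> SL2. conj_act g A \<in> K} = SL2 \<inter> (\<lambda>g. \<chi> i. conj2 g (A$i)) -` K"
      by (auto simp: conj_act_SL2)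
    then have "closed {g \<in> SL2. conj_act g A \<in> K}"
      using continuous_closed_preimage[OF continuous_on_conj2_tuple closed_SL2]
        compact_imp_closed[OF K(1)]
      by simp
    with bounded K have "compact {g \<in> SL2. conj_act g A \<in> K}"
      by (simp add: compact_eq_bounded_closed)
    then show "compactin (top_of_set SL2) {g \<in> topspace (top_of_set SL2). conj_act g A \<in> K}"
      by (simp add: compactin_subtopology)
  qed
qed

lemma singular_kernel_line:
  fixes h :: "'a::field mat2"
  assumes "h \<noteq> 0" "det h = 0"
  obtains v where "v \<noteq> 0" "h *v v = 0" "\<And>u. h *v u = 0 \<Longrightarrow> cross2 u v = 0"
proof -
  obtain i where "h$i \<noteq> 0" using assms(1) by (auto simp: vec_eq_iff)
  define v :: "'a^2" where "v = vector [h$i$2, - h$i$1]"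
  have "v$1 \<noteq> 0 \<or> v$2 \<noteq> 0" using \<open>h$i \<noteq> 0\<close> by (auto simp add: v_def vec2_eq_iff)
  then have "v \<noteq> 0" by auto
  moreover have row: "h$k$1 * h$i$2 - h$k$2 * h$i$1 = 0" for k
    using assms(2) exhaust_2[of k] exhaust_2[of i] by (auto simp: det_2 algebra_simps)
  then have "h *v v = 0"
    using row[of 1] row[of 2]
    by (simp add: v_def vec2_eq_iff matrix_vector_mult_2_nth algebra_simps)
  moreover have "cross2 u v = 0" if "h *v u = 0" for u
  proof -
    have "cross2 u v = - (h *v u)$i"
      by (simp add: v_def cross2_def matrix_vector_mult_2_nth algebra_simps)
    with that show ?thesis by simp
  qed
  ultimately show ?thesis using that by blast
qed

lemma common_eigenvector_if_singular_intertwiner: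
  fixes h :: "'a::field mat2" and A B :: "'a mat2^'n"
  assumes "h \<noteq> 0" "det h = 0" "\<And>i. h ** A$i = B$i ** h"
  shows "has_common_eigenvector A"
proof -
  obtain v where v: "v \<noteq> 0" "h *v v = 0" "\<And>u. h *v u = 0 \<Longrightarrow> cross2 u v = 0"
    using singular_kernel_line[OF assms(1,2)] by blast
  have "h *v (A$i *v v) = B$i *v (h *v v)" for i
    by (simp add: matrix_vector_mul_assoc assms(3))
  then have "fixes_line (A$i) v" for i using v by (simp add: fixes_line_def)
  with v(1) show ?thesis by (auto simp: has_common_eigenvector_def)
qed

lemma scaleR_matrix_mult:
  fixes X :: "'a::real_algebra_1^'k^'m" and Y :: "'a^'n^'k"
  shows "(c *\<^sub>R X) ** Y = c *\<^sub>R (X ** Y)" "X ** (c *\<^sub>R Y) = c *\<^sub>R (X ** Y)"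
  by (simp_all add: vec_eq_iff matrix_matrix_mult_def scaleR_sum_right)

lemma det2_scaleR:
  fixes X :: "'a::{real_algebra_1, comm_ring_1} mat2"
  shows "det (c *\<^sub>R X) = c^2 *\<^sub>R det X"
  by (simp add: det_2 power2_eq_square scaleR_right_diff_distrib)

lemma det_normalized_tendsto_0:
  fixes g :: "'a \<Rightarrow> cmat2"
  assumes "\<And>x. det (g x) = 1" "filterlim (\<lambda>x. norm (g x)) at_top F"
  shows "((\<lambda>x. det (inverse (norm (g x)) *\<^sub>R g x)) \<longlongrightarrow> 0) F"
proof -
  have "((\<lambda>x. inverse (norm (g x)) ^ 2 *\<^sub>R (1::complex)) \<longlongrightarrow> 0 ^ 2 *\<^sub>R 1) F"
    by (intro tendsto_scaleR tendsto_power tendsto_inverse_0_at_top assms(2) tendsto_const)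
  then show ?thesis by (simp add: det2_scaleR assms(1))
qed

text \<open>If the conjugators \<open>g\<^sub>n\<close> were unbounded, a limit of \<open>g\<^sub>n / \<parallel>g\<^sub>n\<parallel>\<close> would be a
  nonzero singular matrix intertwining \<open>A\<close> with a limit point of the orbit.\<close>
lemma bounded_preimage_if_no_common_eigenvector:
  fixes A :: "cmat2^'n"
  assumes none: "\<not> has_common_eigenvector A" and K: "compact K"
  shows "bounded {g \<in> SL2. conj_act g A \<in> K}" (is "bounded ?S")
proof (rule ccontr)
  assume "\<not> bounded ?S"
  then have "\<forall>n. \<exists>g. g \<in> ?S \<and> real n < norm g" by (auto simp: bounded_iff not_le)
  then obtain g where "\<forall>n. g n \<in> ?S \<and> real n < norm (g n)" by (rule choice[THEN exE])
  then have g: "\<And>n. g n \<in> ?S" "\<And>n. real n < norm (g n)" by auto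
  have det_g: "det (g n) = 1" for n using g(1)[of n] by (simp add: SL2_def)
  define h where "h n = inverse (norm (g n)) *\<^sub>R g n" for n
  define B where "B n = conj_act (g n) A" for n
  have "g n \<noteq> 0" for n using det_g[of n] by (auto simp: det_2)
  then have in_compact: "\<forall>n. (h n, B n) \<in> sphere 0 1 \<times> K" using g(1) by (simp add: h_def B_def)
  have "compact (sphere (0::cmat2) 1 \<times> K)" using K by (intro compact_Times) auto
  then obtain l r where l: "l \<in> sphere 0 1 \<times> K" and r: "strict_mono r"
    and lim: "((\<lambda>n. (h n, B n)) \<circ> r) \<longlonglongrightarrow> l"
    using seq_compactE[OF compact_imp_seq_compact in_compact] by blast
  have lim_h: "(\<lambda>n. h (r n)) \<longlonglongrightarrow> fst l" and lim_B: "(\<lambda>n. B (r n)) \<longlonglongrightarrow> snd l"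
    using tendsto_fst[OF lim] tendsto_snd[OF lim] by (simp_all add: o_def)
  have intertwine: "h n ** A$i = B n $ i ** h n" for n i
    using conj2_mult_right[OF det_g, of n "A$i"] g(1)[of n]
    by (simp add: h_def B_def conj_act_SL2 scaleR_matrix_mult)
  have limit_intertwine: "fst l ** A$i = snd l $ i ** fst l" for i
  proof (rule LIMSEQ_unique)
    show "(\<lambda>n. h (r n) ** A$i) \<longlonglongrightarrow> fst l ** A$i"
      by (intro tendsto_matrix_mult lim_h tendsto_const)
    show "(\<lambda>n. h (r n) ** A$i) \<longlonglongrightarrow> snd l $ i ** fst l"
      unfolding intertwine by (intro tendsto_matrix_mult tendsto_vec_nth lim_B lim_h)
  qed
  have "det (fst l) = 0"
  proof -
    have "filterlim (\<lambda>n. norm (g n)) at_top sequentially"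
      by (rule filterlim_at_top_mono[OF filterlim_real_sequentially])
        (intro always_eventually allI less_imp_le g(2))
    then have "filterlim (\<lambda>n. norm (g (r n))) at_top sequentially"
      by (rule filterlim_compose[OF _ filterlim_subseq[OF r]])
    then have "(\<lambda>n. det (h (r n))) \<longlonglongrightarrow> 0"
      unfolding h_def by (rule det_normalized_tendsto_0[OF det_g])
    with tendsto_det[OF lim_h] show ?thesis by (rule LIMSEQ_unique)
  qed
  moreover have "fst l \<noteq> 0" using l by auto
  ultimately have "has_common_eigenvector A"
    by (intro common_eigenvector_if_singular_intertwiner[OF _ _ limit_intertwine])
  with none show False ..
qed

definition diag2 :: "'a::zero \<Rightarrow> 'a \<Rightarrow> 'a mat2" where
  "diag2 a b = vector [vector [a, 0], vector [0, b]]"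

lemma det_diag2: "det (diag2 a b) = a * b"
  by (simp add: diag2_def det_2)

lemma conj2_diag2_lower:
  fixes T :: "'a::comm_ring_1 mat2"
  assumes "a * b = 1" "T$1$2 = 0"
  shows "conj2 (diag2 a b) T = (\<chi> r c. (if r = 2 \<and> c = 1 then b^2 else 1) * T$r$c)"
proof -
  have "a * x * b = x" "b * x * a = x" for x
    using assms(1) by (metis mult.commute mult.left_commute mult_1)+
  then show ?thesis using assms(2) by (simp add: mat2_simps conj2_def diag2_def power2_eq_square)
qed

lemma norm_matrix_nth_le: "norm (M$i$j) \<le> norm (M :: 'a::real_normed_vector^'n^'m)"
  using Finite_Cartesian_Product.norm_nth_le[of "M$i" j] Finite_Cartesian_Product.norm_nth_le[of M i]
  by linarith

lemma unbounded_diag2_orbit: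
  fixes P :: cmat2
  assumes "det P = 1"
  shows "\<not> bounded ((\<lambda>s. diag2 (inverse (of_real s)) (of_real s) ** P) ` {0<..1})"
proof
  assume "bounded ((\<lambda>s. diag2 (inverse (of_real s)) (of_real s) ** P) ` {0<..1})"
  then obtain Bd
    where Bd: "\<And>s. s \<in> {0<..1} \<Longrightarrow> norm (diag2 (inverse (of_real s)) (of_real s) ** P) \<le> Bd"
    unfolding bounded_iff by blast
  have "P$1$1 \<noteq> 0 \<or> P$1$2 \<noteq> 0" using assms by (auto simp: det_2)
  then obtain j where "P$1$j \<noteq> 0" by blast
  define c where "c = cmod (P$1$j)"
  define s where "s = min 1 (c / (\<bar>Bd\<bar> + 1))"
  have "c > 0" using \<open>P$1$j \<noteq> 0\<close> by (simp add: c_def)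
  then have s: "s \<in> {0<..1}" by (simp add: s_def)
  have "s \<le> c / (\<bar>Bd\<bar> + 1)" by (simp add: s_def)
  then have "s * (\<bar>Bd\<bar> + 1) \<le> c" by (simp add: pos_le_divide_eq)
  then have "\<bar>Bd\<bar> + 1 \<le> c / s" using s by (simp add: field_simps)
  also have "c / s = norm ((diag2 (inverse (of_real s)) (of_real s) ** P)$1$j)"
    using s
    by (simp add: c_def diag2_def matrix_mult_2_nth norm_mult norm_inverse divide_inverse mult.commute)
  also have "\<dots> \<le> Bd" using Bd[OF s] norm_matrix_nth_le order_trans by blast
  finally show False by linarith
qed

text \<open>After triangularising, conjugation by \<open>diag2 (1/s) s\<close> only scales the off-diagonal
  entry by \<open>s\<^sup>2\<close>: for \<open>0 < s \<le> 1\<close> the orbit stays on a compact arc while the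
  conjugators diverge.\<close>
lemma unbounded_preimage_if_common_eigenvector:
  fixes A :: "cmat2^'n"
  assumes "A \<in> SL2_tuples" "has_common_eigenvector A"
  obtains K where "compact K" "K \<subseteq> SL2_tuples" "\<not> bounded {g \<in> SL2. conj_act g A \<in> K}"
proof -
  obtain v where "v \<noteq> 0" "\<And>i. fixes_line (A$i) v"
    using assms(2) by (auto simp: has_common_eigenvector_def)
  then obtain P b where P: "det P = 1" "b \<noteq> 0" "P *v v = vector [0, b]"
    using SL2_normalize by blast
  define T where "T i = conj2 P (A$i)" for i
  have T12: "T i $1$2 = 0" for i
    using fixes_line_iff_conj2_12[OF P] \<open>\<And>i. fixes_line (A$i) v\<close> by (simp add: T_def)
  have det_T: "det (T i) = 1" for i
    using assms(1) by (simp add: T_def det_conj2[OF P(1)] SL2_tuples_iff SL2_def)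
  define curve :: "real \<Rightarrow> cmat2^'n" where
    "curve t = (\<chi> i. \<chi> r c. (if r = 2 \<and> c = 1 then (of_real t)^2 else 1) * T i $r$c)" for t
  have "continuous_on {0..1} curve"
    unfolding curve_def
  proof (intro continuous_on_vec_lambda)
    fix i r c
    show "continuous_on {0..1} (\<lambda>t. (if r = 2 \<and> c = 1 then (of_real t)^2 else 1) * T i $r$c)"
      by (cases "r = 2 \<and> c = 1") (auto intro!: continuous_intros)
  qed
  then have "compact (curve ` {0..1})" by (intro compact_continuous_image) auto
  moreover have "curve ` {0..1} \<subseteq> SL2_tuples"
    using det_T T12 by (auto simp: curve_def SL2_tuples_iff SL2_def det_2)
  moreover have "(\<lambda>s. diag2 (inverse (of_real s)) (of_real s) ** P) ` {0<..1}
      \<subseteq> {g \<in> SL2. conj_act g A \<in> curve ` {0..1}}"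
  proof (intro image_subsetI CollectI conjI)
    fix s :: real assume s: "s \<in> {0<..1}"
    let ?g = "diag2 (inverse (of_real s)) (of_real s) ** P"
    have "det ?g = 1" using s P(1) by (simp add: det_mul det_diag2)
    then show "?g \<in> SL2" by (simp add: SL2_def)
    have "conj_act ?g A = curve s"
      using s \<open>?g \<in> SL2\<close> T12
      by (simp add: conj_act_SL2 conj2_conj2 conj2_diag2_lower curve_def T_def[symmetric])
    with s show "conj_act ?g A \<in> curve ` {0..1}" by auto
  qed
  then have "\<not> bounded {g \<in> SL2. conj_act g A \<in> curve ` {0..1}}"
    using unbounded_diag2_orbit[OF P(1)] bounded_subset by blast
  ultimately show ?thesis using that by blast
qed

lemma stable_iff_no_common_eigenvector:
  fixes A :: "cmat2^'n"
  assumes "A \<in> SL2_tuples"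
  shows "stable A \<longleftrightarrow> \<not> has_common_eigenvector A"
proof (intro iffI notI)
  assume "stable A" "has_common_eigenvector A"
  then show False
    using stable_iff_bounded_preimages[OF assms] unbounded_preimage_if_common_eigenvector[OF assms]
    by blast
next
  assume "\<not> has_common_eigenvector A"
  then show "stable A"
    using stable_iff_bounded_preimages[OF assms] bounded_preimage_if_no_common_eigenvector by blast
qed

theorem theorem4p2:
  fixes \<Gamma> :: "('g, 'b) monoid_scheme"
    and \<epsilon> :: "'n::finite \<Rightarrow> 'g"
    and \<rho> :: "'g \<Rightarrow> cmat2"
    and A :: "cmat2^'n"
  assumes "group \<Gamma>"
    and "\<And>i. \<epsilon> i \<in> carrier \<Gamma>"
    and "generate \<Gamma> (range \<epsilon>) = carrier \<Gamma>"
    and "\<rho> \<in> hom \<Gamma> SL2_group"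
    and "A = (\<chi> i. \<rho> (\<epsilon> i))"
  shows "(stable A \<longleftrightarrow> (\<exists>j k l. stable (triple (\<rho> (\<epsilon> j)) (\<rho> (\<epsilon> k)) (\<rho> (\<epsilon> l)))))
       \<and> (stable A \<longleftrightarrow> (\<exists>j k l. sigma A j k \<noteq> 0 \<or> Delta A j k l \<noteq> 0))
       \<and> (stable A \<longleftrightarrow> \<not> similar_upper_triangular A)
       \<and> (stable A \<longleftrightarrow> irreducible_rep \<Gamma> \<rho>)"
proof -
  have in_SL2: "\<rho> (\<epsilon> i) \<in> SL2" for i
    using hom_in_carrier[OF assms(4,2)] by (simp add: SL2_group_def)
  then have "A \<in> SL2_tuples" by (simp add: assms(5) SL2_tuples_iff)
  then have stable_A: "stable A \<longleftrightarrow> \<not> has_common_eigenvector A"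
    by (rule stable_iff_no_common_eigenvector)
  have "triple (\<rho> (\<epsilon> j)) (\<rho> (\<epsilon> k)) (\<rho> (\<epsilon> l)) \<in> SL2_tuples" for j k l
    using in_SL2 all_triple_iff[of "\<lambda>M. M \<in> SL2"] by (simp add: SL2_tuples_iff)
  then have stable_triple: "stable (triple (\<rho> (\<epsilon> j)) (\<rho> (\<epsilon> k)) (\<rho> (\<epsilon> l)))
      \<longleftrightarrow> \<not> has_common_eigenvector (triple (A$j) (A$k) (A$l))" for j k l
    by (simp add: stable_iff_no_common_eigenvector assms(5))
  have "det (A$i) = 1" for i using in_SL2 by (simp add: assms(5) SL2_def)
  then have sigma_Delta: "stable A \<longleftrightarrow> (\<exists>j k l. sigma A j k \<noteq> 0 \<or> Delta A j k l \<noteq> 0)"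
    unfolding stable_A by (rule no_common_eigenvector_iff_sigma_Delta)
  have "range \<epsilon> \<subseteq> carrier \<Gamma>" using assms(2) by blast
  then have irreducible: "stable A \<longleftrightarrow> irreducible_rep \<Gamma> \<rho>"
    using irreducible_rep_iff_no_common_eigenvector[OF assms(1,4) _ assms(3)] stable_A
    by (simp add: assms(5))
  have triples:
    "stable A \<longleftrightarrow> (\<exists>j k l. stable (triple (\<rho> (\<epsilon> j)) (\<rho> (\<epsilon> k)) (\<rho> (\<epsilon> l))))"
    unfolding stable_A stable_triple has_common_eigenvector_iff_triples[of A] by blast
  show ?thesis
    using triples sigma_Delta irreducible stable_A
      similar_upper_triangular_iff_common_eigenvector[of A]
    by blast
qed

end
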